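(* Let $L\subseteq B_p$ be an integral lattice with $\mathbb{Z}\subseteq L$. Then \[\theta_L(q)=\Big(\sum_{\substack{\beta\in\tau(L)\\ N(\beta)\equiv 0\ (\mathrm{mod}\ 4)}}q^{N(\beta)/4}\Big)\theta_0(q)+\Big(\sum_{\substack{\beta\in\tau(L)\\ N(\beta)\equiv 3\ (\mathrm{mod}\ 4)}}q^{(1+N(\beta))/4}\Big)\theta_1(q).\]
   Context: $B_p$ is the quaternion algebra over $\mathbb{Q}$ ramified exactly at the prime $p$ and $\infty$, with canonical involution $\overline{x}$, reduced norm $N(x)=x\overline{x}$ and reduced trace $\mathrm{Tr}(x)=x+\overline{x}$. A lattice $L\subseteq B_p$ is integral if $N(x),\mathrm{Tr}(x)\in\mathbb{Z}$ for all $x\in L$. $\tau:B_p\to B_p$ is $\tau(x)=2x-\mathrm{Tr}(x)$ and $\tau(L)=\{\tau(x):x\in L\}$. $\theta_L(q)=\sum_{x\in L}q^{N(x)}$, $\theta_0(q)=\sum_{n\in\mathbb{Z}}q^{n^2}$, $\theta_1(q)=\sum_{n\in\mathbb{Z}}q^{n^2+n}$. *)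

theory Defs
  imports "HOL-Computational_Algebra.Formal_Power_Series" "HOL-Number_Theory.Cong"
    "HOL-Computational_Algebra.Primes"
begin

text \<open>Quaternion algebra (a,b)_Q over Q: elements x0 + x1 i + x2 j + x3 k with
  i^2 = a, j^2 = b, ij = -ji = k.\<close>

datatype quat = Quat (qre: rat) (qi: rat) (qj: rat) (qk: rat)

definition qzero :: quat where "qzero = Quat 0 0 0 0"

definition qadd :: "quat \<Rightarrow> quat \<Rightarrow> quat" where
  "qadd x y = Quat (qre x + qre y) (qi x + qi y) (qj x + qj y) (qk x + qk y)"

definition qsmul :: "rat \<Rightarrow> quat \<Rightarrow> quat" where
  "qsmul r x = Quat (r * qre x) (r * qi x) (r * qj x) (r * qk x)"

definition qof_rat :: "rat \<Rightarrow> quat" where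
  "qof_rat r = Quat r 0 0 0"

definition qconj :: "quat \<Rightarrow> quat" where
  "qconj x = Quat (qre x) (- qi x) (- qj x) (- qk x)"

definition qmul :: "rat \<Rightarrow> rat \<Rightarrow> quat \<Rightarrow> quat \<Rightarrow> quat" where
  "qmul a b x y = Quat
     (qre x * qre y + a * qi x * qi y + b * qj x * qj y - a * b * qk x * qk y)
     (qre x * qi y + qi x * qre y - b * qj x * qk y + b * qk x * qj y)
     (qre x * qj y + qj x * qre y + a * qi x * qk y - a * qk x * qi y)
     (qre x * qk y + qk x * qre y + qi x * qj y - qj x * qi y)"

text \<open>Reduced norm N(x) = x * conj x and reduced trace Tr(x) = x + conj x (both scalars).\<close>
definition qnorm :: "rat \<Rightarrow> rat \<Rightarrow> quat \<Rightarrow> rat" where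
  "qnorm a b x = qre (qmul a b x (qconj x))"

definition qtr :: "quat \<Rightarrow> rat" where
  "qtr x = qre (qadd x (qconj x))"

definition qtau :: "quat \<Rightarrow> quat" where
  "qtau x = qadd (qsmul 2 x) (qof_rat (- qtr x))"

text \<open>Isotropy of z^2 = a x^2 + b y^2 over Q_l (l prime): after scaling a, b to integers
  A = a d_a^2, B = b d_b^2, there are primitive integer solutions modulo every power of l.\<close>
definition int_sq_scale :: "rat \<Rightarrow> int" where
  "int_sq_scale r = fst (quotient_of r) * snd (quotient_of r)"

definition isotropic_at :: "int \<Rightarrow> rat \<Rightarrow> rat \<Rightarrow> bool" where
  "isotropic_at l a b \<longleftrightarrow> (\<forall>k::nat. \<exists>x y z :: int.
      \<not> (l dvd x \<and> l dvd y \<and> l dvd z) \<and>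
      [int_sq_scale a * x^2 + int_sq_scale b * y^2 = z^2] (mod l^k))"

text \<open>(a,b)_Q is ramified exactly at p and infinity.\<close>
definition ramified_exactly_at :: "rat \<Rightarrow> rat \<Rightarrow> int \<Rightarrow> bool" where
  "ramified_exactly_at a b p \<longleftrightarrow> a \<noteq> 0 \<and> b \<noteq> 0 \<and> prime p \<and>
     (a < 0 \<and> b < 0) \<and>
     \<not> isotropic_at p a b \<and>
     (\<forall>l. prime l \<and> l \<noteq> p \<longrightarrow> isotropic_at l a b)"

definition lincomb4 :: "(nat \<Rightarrow> rat) \<Rightarrow> (nat \<Rightarrow> quat) \<Rightarrow> quat" where
  "lincomb4 c e = qadd (qadd (qsmul (c 0) (e 0)) (qsmul (c 1) (e 1)))
                       (qadd (qsmul (c 2) (e 2)) (qsmul (c 3) (e 3)))"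

definition is_lattice :: "quat set \<Rightarrow> bool" where
  "is_lattice L \<longleftrightarrow> (\<exists>e. (\<forall>c. lincomb4 c e = qzero \<longrightarrow> (\<forall>i<4. c i = 0)) \<and>
       L = {lincomb4 (\<lambda>i. of_int (n i)) e | n :: nat \<Rightarrow> int. True})"

definition integral_lattice :: "rat \<Rightarrow> rat \<Rightarrow> quat set \<Rightarrow> bool" where
  "integral_lattice a b L \<longleftrightarrow> is_lattice L \<and>
     (\<forall>x\<in>L. qnorm a b x \<in> \<int> \<and> qtr x \<in> \<int>)"

definition theta_L :: "rat \<Rightarrow> rat \<Rightarrow> quat set \<Rightarrow> int fps" where
  "theta_L a b L = Abs_fps (\<lambda>n. int (card {x\<in>L. qnorm a b x = of_nat n}))"

definition theta0 :: "int fps" where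
  "theta0 = Abs_fps (\<lambda>n. int (card {m::int. m^2 = int n}))"

definition theta1 :: "int fps" where
  "theta1 = Abs_fps (\<lambda>n. int (card {m::int. m^2 + m = int n}))"

definition tau_sum0 :: "rat \<Rightarrow> rat \<Rightarrow> quat set \<Rightarrow> int fps" where
  "tau_sum0 a b L = Abs_fps (\<lambda>n. int (card {\<beta>\<in>qtau ` L. \<exists>m::int.
      qnorm a b \<beta> = of_int m \<and> m mod 4 = 0 \<and> m div 4 = int n}))"

definition tau_sum3 :: "rat \<Rightarrow> rat \<Rightarrow> quat set \<Rightarrow> int fps" where
  "tau_sum3 a b L = Abs_fps (\<lambda>n. int (card {\<beta>\<in>qtau ` L. \<exists>m::int.
      qnorm a b \<beta> = of_int m \<and> m mod 4 = 3 \<and> (1 + m) div 4 = int n}))"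

end

theory Submission
  imports Defs
begin

text \<open>
  An element x of L is determined by the pure quaternion \<tau>(x) = 2x - Tr(x) together with Tr(x),
  and N(\<tau>(x)) = 4 N(x) - Tr(x)^2. Writing Tr(x) = 2s or 2s + 1, this forces N(\<tau>(x)) to be
  0 or 3 mod 4 respectively, with N(x) = N(\<tau>(x))/4 + s^2 or N(x) = (N(\<tau>(x)) + 1)/4 + s^2 + s.
  Since Z \<subseteq> L, translating x by integers realises every s, so x \<mapsto> (\<tau>(x), s) is a norm-preserving
  bijection from L onto two copies of \<tau>(L) \<times> Z, and the identity is the product rule for
  generating series of weighted sets. Definiteness of B_p makes all the norm fibres finite.
\<close>

lemma qnorm_eq_sum_squares:
  "qnorm a b x = qre x ^ 2 - a * qi x ^ 2 - b * qj x ^ 2 + a * b * qk x ^ 2"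
  by (simp add: qnorm_def qmul_def qconj_def power2_eq_square)

lemma qtr_eq_double_qre: "qtr x = 2 * qre x"
  by (simp add: qtr_def qadd_def qconj_def)

lemma qtau_eq_Quat: "qtau x = Quat 0 (2 * qi x) (2 * qj x) (2 * qk x)"
  by (simp add: qtau_def qadd_def qsmul_def qof_rat_def qtr_eq_double_qre)

lemma qtau_eq_qadd: "qtau x = qadd (qadd x x) (qof_rat (- qtr x))"
  by (simp add: qtau_def qadd_def qsmul_def)

lemma qnorm_qtau: "qnorm a b (qtau x) = 4 * qnorm a b x - (qtr x)\<^sup>2"
  by (simp add: qnorm_eq_sum_squares qtau_eq_Quat qtr_eq_double_qre power2_eq_square
      algebra_simps)

lemma qtau_qadd_qof_rat: "qtau (qadd x (qof_rat r)) = qtau x"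
  by (simp add: qtau_eq_Quat qadd_def qof_rat_def)

lemma qtr_qadd_qof_rat: "qtr (qadd x (qof_rat r)) = qtr x + 2 * r"
  by (simp add: qtr_eq_double_qre qadd_def qof_rat_def)

lemma qtau_qtr_inj: "qtau x = qtau y \<Longrightarrow> qtr x = qtr y \<Longrightarrow> x = y"
  by (cases x; cases y) (simp add: qtau_eq_Quat qtr_eq_double_qre)

lemma qnorm_ge_coord_squares:
  assumes "a < 0" "b < 0"
  shows "qre x ^ 2 \<le> qnorm a b x" "- a * qi x ^ 2 \<le> qnorm a b x"
    "- b * qj x ^ 2 \<le> qnorm a b x" "a * b * qk x ^ 2 \<le> qnorm a b x"
proof -
  have "0 \<le> - a * qi x ^ 2" "0 \<le> - b * qj x ^ 2" "0 \<le> a * b * qk x ^ 2" "0 \<le> qre x ^ 2"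
    using assms by (simp_all add: mult_nonpos_nonneg mult_nonpos_nonpos)
  then show "qre x ^ 2 \<le> qnorm a b x" "- a * qi x ^ 2 \<le> qnorm a b x"
    "- b * qj x ^ 2 \<le> qnorm a b x" "a * b * qk x ^ 2 \<le> qnorm a b x"
    unfolding qnorm_eq_sum_squares by linarith+
qed

lemma qnorm_nonneg: "a < 0 \<Longrightarrow> b < 0 \<Longrightarrow> 0 \<le> qnorm a b x"
  using qnorm_ge_coord_squares(1)[of a b x] zero_le_power2[of "qre x"] by linarith

lemma common_denominator:
  fixes S :: "rat set"
  assumes "finite S"
  shows "\<exists>D::int. D > 0 \<and> (\<forall>r\<in>S. of_int D * r \<in> \<int>)"
proof (intro exI conjI ballI)
  let ?den = "\<lambda>r. snd (quotient_of r)"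
  show "0 < prod ?den S"
    using quotient_of_denom_pos' by (intro prod_pos) auto
  fix r assume "r \<in> S"
  obtain u d where q: "quotient_of r = (u, d)"
    by (cases "quotient_of r")
  have "of_int (prod ?den S) * r = of_int (prod ?den (S - {r})) * (of_int d * r)"
    using assms \<open>r \<in> S\<close> q by (simp add: prod.remove)
  also have "\<dots> = of_int (prod ?den (S - {r}) * u)"
    using quotient_of_div[OF q] quotient_of_denom_pos[OF q] by simp
  finally show "of_int (prod ?den S) * r \<in> \<int>"
    by (metis Ints_of_int)
qed

lemma coord_lincomb4:
  assumes "f \<in> {qre, qi, qj, qk}"
  shows "f (lincomb4 c e) = (\<Sum>i<4. c i * f (e i))"
  using assms by (auto simp: lincomb4_def qadd_def qsmul_def eval_nat_numeral)

lemma is_lattice_qadd_mem: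
  assumes "is_lattice L" "x \<in> L" "y \<in> L"
  shows "qadd x y \<in> L"
proof -
  obtain e where L: "L = {lincomb4 (\<lambda>i. of_int (n i)) e | n :: nat \<Rightarrow> int. True}"
    using assms(1) by (auto simp: is_lattice_def)
  obtain m n where "x = lincomb4 (\<lambda>i. of_int (m i)) e" "y = lincomb4 (\<lambda>i. of_int (n i)) e"
    using L assms(2,3) by auto
  then have sum: "qadd x y = lincomb4 (\<lambda>i. of_int (m i + n i)) e"
    by (simp add: lincomb4_def qadd_def qsmul_def algebra_simps)
  show ?thesis
    unfolding L by (intro CollectI exI[of _ "\<lambda>i. m i + n i"]) (simp add: sum)
qed

lemma is_lattice_common_denominator:
  assumes "is_lattice L"
  obtains D :: int where "D > 0"
    and "\<And>x f. x \<in> L \<Longrightarrow> f \<in> {qre, qi, qj, qk} \<Longrightarrow> of_int D * f x \<in> \<int>"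
proof -
  obtain e where L: "L = {lincomb4 (\<lambda>i. of_int (n i)) e | n :: nat \<Rightarrow> int. True}"
    using assms by (auto simp: is_lattice_def)
  have "finite ((\<lambda>(f, i). f (e i)) ` ({qre, qi, qj, qk} \<times> {..<4::nat}))"
    by simp
  then obtain D :: int where "D > 0"
    and D: "\<forall>r \<in> (\<lambda>(f, i). f (e i)) ` ({qre, qi, qj, qk} \<times> {..<4::nat}). of_int D * r \<in> \<int>"
    using common_denominator by blast
  show ?thesis
  proof (rule that[OF \<open>D > 0\<close>])
    fix x f assume "x \<in> L" and f: "f \<in> {qre, qi, qj, qk}"
    then obtain n where "x = lincomb4 (\<lambda>i. of_int (n i)) e"
      using L by auto
    then have "of_int D * f x = (\<Sum>i<4. of_int (n i) * (of_int D * f (e i)))"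
      by (simp add: coord_lincomb4[OF f] sum_distrib_left algebra_simps)
    also have "\<dots> \<in> \<int>"
    proof (rule Ints_sum)
      fix i :: nat assume "i \<in> {..<4}"
      then have "of_int D * f (e i) \<in> \<int>"
        using D f by auto
      then show "of_int (n i) * (of_int D * f (e i)) \<in> \<int>"
        by (rule Ints_mult[OF Ints_of_int])
    qed
    finally show "of_int D * f x \<in> \<int>" .
  qed
qed

lemma abs_le_square_int: "\<bar>k\<bar> \<le> (k::int)\<^sup>2"
proof (cases "k = 0")
  case False
  then have "\<bar>k\<bar> * 1 \<le> \<bar>k\<bar> * \<bar>k\<bar>"
    by (intro mult_left_mono) auto
  then show ?thesis
    by (simp add: power2_eq_square)
qed simp

lemma finite_int_square_le: "finite {k::int. k\<^sup>2 \<le> M}"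
proof (rule finite_subset)
  show "{k::int. k\<^sup>2 \<le> M} \<subseteq> {-M..M}"
  proof
    fix k assume "k \<in> {k::int. k\<^sup>2 \<le> M}"
    then have "\<bar>k\<bar> \<le> M"
      using abs_le_square_int[of k] by simp
    then show "k \<in> {-M..M}"
      by (simp add: abs_le_iff)
  qed
qed simp

lemma finite_bounded_denominator:
  assumes "D > 0" "w > 0"
  shows "finite {r::rat. of_int D * r \<in> \<int> \<and> w * r\<^sup>2 \<le> C}"
proof (rule finite_subset)
  let ?M = "\<lceil>of_int D ^ 2 * (C / w)\<rceil>"
  show "{r::rat. of_int D * r \<in> \<int> \<and> w * r\<^sup>2 \<le> C}
      \<subseteq> (\<lambda>k. of_int k / of_int D) ` {k. k\<^sup>2 \<le> ?M}"
  proof clarify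
    fix r :: rat assume "of_int D * r \<in> \<int>" "w * r\<^sup>2 \<le> C"
    then obtain k where k: "of_int k = of_int D * r"
      by (metis Ints_cases)
    have "r\<^sup>2 \<le> C / w"
      using \<open>w * r\<^sup>2 \<le> C\<close> \<open>w > 0\<close> by (simp add: pos_le_divide_eq mult.commute)
    have "of_int (k\<^sup>2) = of_int D ^ 2 * r\<^sup>2"
      by (simp add: k power_mult_distrib)
    also have "\<dots> \<le> of_int D ^ 2 * (C / w)"
      using mult_left_mono[OF \<open>r\<^sup>2 \<le> C / w\<close>, of "of_int D ^ 2"] by simp
    finally have "k\<^sup>2 \<le> ?M"
      by linarith
    moreover have "r = of_int k / of_int D"
      using k assms by simp
    ultimately show "r \<in> (\<lambda>k. of_int k / of_int D) ` {k. k\<^sup>2 \<le> ?M}"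
      by blast
  qed
qed (simp add: finite_int_square_le)

lemma finite_lattice_qnorm_le:
  assumes "a < 0" "b < 0" "is_lattice L"
  shows "finite {x \<in> L. qnorm a b x \<le> c}"
proof -
  obtain D :: int where "D > 0"
    and D: "\<And>x f. x \<in> L \<Longrightarrow> f \<in> {qre, qi, qj, qk} \<Longrightarrow> of_int D * f x \<in> \<int>"
    using is_lattice_common_denominator[OF assms(3)] by blast
  define R where "R w = {r::rat. of_int D * r \<in> \<int> \<and> w * r\<^sup>2 \<le> c}" for w
  have sub: "{x \<in> L. qnorm a b x \<le> c} \<subseteq> (\<lambda>(r0, r1, r2, r3). Quat r0 r1 r2 r3) `
      (R 1 \<times> R (- a) \<times> R (- b) \<times> R (a * b))"
  proof clarify
    fix x assume "x \<in> L" "qnorm a b x \<le> c"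
    then have "1 * qre x ^ 2 \<le> c" "- a * qi x ^ 2 \<le> c" "- b * qj x ^ 2 \<le> c"
      "a * b * qk x ^ 2 \<le> c"
      using qnorm_ge_coord_squares[OF assms(1,2), of x] by linarith+
    then have "qre x \<in> R 1" "qi x \<in> R (- a)" "qj x \<in> R (- b)" "qk x \<in> R (a * b)"
      using D[OF \<open>x \<in> L\<close>] by (simp_all add: R_def)
    then show "x \<in> (\<lambda>(r0, r1, r2, r3). Quat r0 r1 r2 r3) `
        (R 1 \<times> R (- a) \<times> R (- b) \<times> R (a * b))"
      by (intro image_eqI[of _ _ "(qre x, qi x, qj x, qk x)"]) auto
  qed
  have "finite (R w)" if "w > 0" for w
    unfolding R_def using finite_bounded_denominator[OF \<open>D > 0\<close> that] .
  then have "finite (R 1 \<times> R (- a) \<times> R (- b) \<times> R (a * b))"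
    using assms(1,2) by (intro finite_cartesian_product) (auto simp: mult_neg_neg)
  with sub show ?thesis
    by (meson finite_imageI finite_subset)
qed

definition generating_fps :: "'a set \<Rightarrow> ('a \<Rightarrow> nat) \<Rightarrow> int fps" where
  "generating_fps X w = Abs_fps (\<lambda>n. int (card {x \<in> X. w x = n}))"

text \<open>Fibres must be finite for the series calculus below, as \<open>card\<close> is 0 on infinite sets.\<close>

definition finite_fibres :: "'a set \<Rightarrow> ('a \<Rightarrow> nat) \<Rightarrow> bool" where
  "finite_fibres X w \<longleftrightarrow> (\<forall>n. finite {x \<in> X. w x = n})"

lemma generating_fps_bij_betw:
  assumes "bij_betw f X Y" "\<And>x. x \<in> X \<Longrightarrow> w (f x) = v x"
  shows "generating_fps X v = generating_fps Y w"
proof (rule fps_ext)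
  fix n
  have "bij_betw f {x \<in> X. v x = n} {y \<in> Y. w y = n}"
    using assms by (intro bij_betw_Collect) auto
  then show "fps_nth (generating_fps X v) n = fps_nth (generating_fps Y w) n"
    by (simp add: generating_fps_def bij_betw_same_card)
qed

lemma generating_fps_Plus:
  assumes "finite_fibres X v" "finite_fibres Y w"
  shows "generating_fps (X <+> Y) (case_sum v w) = generating_fps X v + generating_fps Y w"
    (is "?L = ?R")
proof (rule fps_ext)
  fix n
  have "{z \<in> X <+> Y. case_sum v w z = n} = {x \<in> X. v x = n} <+> {y \<in> Y. w y = n}"
    by auto
  then show "fps_nth ?L n = fps_nth ?R n"
    using assms by (simp add: generating_fps_def finite_fibres_def card_Plus)
qed

lemma fibre_Times:
  fixes v :: "'a \<Rightarrow> nat" and w :: "'b \<Rightarrow> nat"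
  shows
  "{z \<in> X \<times> Y. (case z of (x, y) \<Rightarrow> v x + w y) = n}
    = (\<Union>i\<le>n. {x \<in> X. v x = i} \<times> {y \<in> Y. w y = n - i})"
proof (intro set_eqI iffI)
  fix z assume "z \<in> {z \<in> X \<times> Y. (case z of (x, y) \<Rightarrow> v x + w y) = n}"
  then obtain x y where "z = (x, y)" "x \<in> X" "y \<in> Y" "v x + w y = n"
    by auto
  then show "z \<in> (\<Union>i\<le>n. {x \<in> X. v x = i} \<times> {y \<in> Y. w y = n - i})"
    by (intro UN_I[of "v x"]) auto
qed auto

lemma finite_fibres_Times:
  assumes "finite_fibres X v" "finite_fibres Y w"
  shows "finite_fibres (X \<times> Y) (\<lambda>(x, y). v x + w y)"
  using assms by (auto simp: finite_fibres_def fibre_Times)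

lemma generating_fps_Times:
  assumes "finite_fibres X v" "finite_fibres Y w"
  shows "generating_fps X v * generating_fps Y w = generating_fps (X \<times> Y) (\<lambda>(x, y). v x + w y)"
    (is "?L = ?R")
proof (rule fps_ext)
  fix n
  have "fps_nth ?L n = (\<Sum>i\<le>n. int (card ({x \<in> X. v x = i} \<times> {y \<in> Y. w y = n - i})))"
    by (simp add: fps_mult_nth generating_fps_def atMost_atLeast0 card_cartesian_product)
  also have "\<dots> = int (card (\<Union>i\<le>n. {x \<in> X. v x = i} \<times> {y \<in> Y. w y = n - i}))"
    using assms by (subst card_UN_disjoint) (auto simp: finite_fibres_def)
  also have "\<dots> = fps_nth ?R n"
    by (simp add: generating_fps_def fibre_Times)
  finally show "fps_nth ?L n = fps_nth ?R n" .
qed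

lemma pronic_nonneg: "0 \<le> (s::int)\<^sup>2 + s"
proof -
  have "0 \<le> s * (s + 1)"
    by (cases "0 \<le> s") (auto simp: zero_le_mult_iff)
  then show ?thesis
    by (simp add: power2_eq_square algebra_simps)
qed

lemma theta0_eq_generating_fps: "theta0 = generating_fps UNIV (\<lambda>m::int. nat (m\<^sup>2))"
  by (rule fps_ext) (simp add: theta0_def generating_fps_def nat_eq_iff)

lemma theta1_eq_generating_fps: "theta1 = generating_fps UNIV (\<lambda>m::int. nat (m\<^sup>2 + m))"
  by (rule fps_ext) (simp add: theta1_def generating_fps_def nat_eq_iff pronic_nonneg)

lemma finite_fibres_square: "finite_fibres UNIV (\<lambda>m::int. nat (m\<^sup>2))"
  unfolding finite_fibres_def
proof
  fix n
  have "{m \<in> UNIV. nat (m\<^sup>2) = n} \<subseteq> {m. m\<^sup>2 \<le> int n}"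
    by auto
  then show "finite {m \<in> UNIV. nat (m\<^sup>2) = n}"
    using finite_int_square_le by (rule finite_subset)
qed

lemma finite_fibres_pronic: "finite_fibres UNIV (\<lambda>m::int. nat (m\<^sup>2 + m))"
  unfolding finite_fibres_def
proof
  fix n
  have "m\<^sup>2 \<le> 2 * (m\<^sup>2 + m) + 1" for m :: int
    using zero_le_power2[of "m + 1"] by (simp add: power2_eq_square algebra_simps)
  then have "{m \<in> UNIV. nat (m\<^sup>2 + m) = n} \<subseteq> {m. m\<^sup>2 \<le> 2 * int n + 1}"
    using pronic_nonneg by fastforce
  then show "finite {m \<in> UNIV. nat (m\<^sup>2 + m) = n}"
    using finite_int_square_le by (rule finite_subset)
qed

lemma nat_eq_four_mul_sub:
  fixes m M :: nat and u :: int
  assumes "0 \<le> u" "int m = 4 * (int M - u)"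
  shows "m mod 4 = 0" "m div 4 + nat u = M"
  using assms by presburger+

lemma nat_succ_eq_four_mul_sub:
  fixes m M :: nat and u :: int
  assumes "0 \<le> u" "int m + 1 = 4 * (int M - u)"
  shows "m mod 4 = 3" "(m + 1) div 4 + nat u = M"
  using assms by presburger+

lemma of_nat_mod_div_4:
  "int k mod 4 = int (k mod 4)" "int k div 4 = int (k div 4)"
  "(1 + int k) div 4 = int ((k + 1) div 4)"
  by (simp_all add: of_nat_mod of_nat_div add.commute)

locale definite_integral_lattice =
  fixes a b :: rat and L :: "quat set"
  assumes a_neg: "a < 0" and b_neg: "b < 0"
    and integral: "integral_lattice a b L"
    and of_int_mem: "\<And>n. qof_rat (of_int n) \<in> L"
begin

definition N :: "quat \<Rightarrow> nat" where
  "N x = nat \<lfloor>qnorm a b x\<rfloor>"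

definition Tr :: "quat \<Rightarrow> int" where
  "Tr x = \<lfloor>qtr x\<rfloor>"

lemma qnorm_eq_of_nat_N:
  assumes "x \<in> L"
  shows "qnorm a b x = of_nat (N x)"
proof -
  obtain k where "qnorm a b x = of_int k"
    using integral assms by (auto simp: integral_lattice_def elim: Ints_cases)
  moreover have "0 \<le> qnorm a b x"
    using qnorm_nonneg[OF a_neg b_neg] .
  ultimately show ?thesis
    by (simp add: N_def)
qed

lemma qtr_eq_of_int_Tr: "x \<in> L \<Longrightarrow> qtr x = of_int (Tr x)"
  using integral by (auto simp: integral_lattice_def Tr_def elim!: Ints_cases)

lemma qadd_mem: "x \<in> L \<Longrightarrow> y \<in> L \<Longrightarrow> qadd x y \<in> L"
  using integral is_lattice_qadd_mem unfolding integral_lattice_def by blast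

lemma qadd_of_int_mem: "x \<in> L \<Longrightarrow> qadd x (qof_rat (of_int k)) \<in> L"
  using qadd_mem of_int_mem by blast

lemma qtau_mem:
  assumes "x \<in> L"
  shows "qtau x \<in> L"
proof -
  have "qtau x = qadd (qadd x x) (qof_rat (of_int (- Tr x)))"
    by (simp add: qtau_eq_qadd qtr_eq_of_int_Tr[OF assms])
  also have "\<dots> \<in> L"
    by (intro qadd_of_int_mem qadd_mem assms)
  finally show ?thesis .
qed

lemma Tr_qadd_of_int:
  assumes "x \<in> L"
  shows "Tr (qadd x (qof_rat (of_int k))) = Tr x + 2 * k"
proof -
  have tr: "qtr (qadd x (qof_rat (of_int k))) = of_int (Tr x + 2 * k)"
    by (simp add: qtr_qadd_qof_rat qtr_eq_of_int_Tr[OF assms])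
  show ?thesis
    by (simp only: Tr_def tr floor_of_int)
qed

lemma int_N_qtau:
  assumes "x \<in> L"
  shows "int (N (qtau x)) = 4 * int (N x) - (Tr x)\<^sup>2"
proof -
  have "(of_int (int (N (qtau x))) :: rat) = qnorm a b (qtau x)"
    using qnorm_eq_of_nat_N[OF qtau_mem[OF assms]] by simp
  also have "\<dots> = 4 * qnorm a b x - (qtr x)\<^sup>2"
    by (rule qnorm_qtau)
  also have "\<dots> = of_int (4 * int (N x) - (Tr x)\<^sup>2)"
    by (simp add: qnorm_eq_of_nat_N[OF assms] qtr_eq_of_int_Tr[OF assms])
  finally show ?thesis
    by (simp only: of_int_eq_iff)
qed

lemma N_qtau_even:
  assumes "x \<in> L" "even (Tr x)"
  shows "N (qtau x) mod 4 = 0" "N (qtau x) div 4 + nat ((Tr x div 2)\<^sup>2) = N x"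
proof -
  have N_eq: "int (N (qtau x)) = 4 * (int (N x) - (Tr x div 2)\<^sup>2)"
    using int_N_qtau[OF assms(1)] assms(2) by (auto elim!: evenE simp: power_mult_distrib)
  show "N (qtau x) mod 4 = 0"
    by (rule nat_eq_four_mul_sub(1)[OF zero_le_power2 N_eq])
  show "N (qtau x) div 4 + nat ((Tr x div 2)\<^sup>2) = N x"
    by (rule nat_eq_four_mul_sub(2)[OF zero_le_power2 N_eq])
qed

lemma N_qtau_odd:
  assumes "x \<in> L" "odd (Tr x)"
  shows "N (qtau x) mod 4 = 3"
    "(N (qtau x) + 1) div 4 + nat ((Tr x div 2)\<^sup>2 + Tr x div 2) = N x"
proof -
  have N_eq: "int (N (qtau x)) + 1 = 4 * (int (N x) - ((Tr x div 2)\<^sup>2 + Tr x div 2))"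
    using int_N_qtau[OF assms(1)] assms(2)
    by (auto elim!: oddE simp: power2_eq_square algebra_simps)
  show "N (qtau x) mod 4 = 3"
    by (rule nat_succ_eq_four_mul_sub(1)[OF pronic_nonneg N_eq])
  show "(N (qtau x) + 1) div 4 + nat ((Tr x div 2)\<^sup>2 + Tr x div 2) = N x"
    by (rule nat_succ_eq_four_mul_sub(2)[OF pronic_nonneg N_eq])
qed

lemma even_Tr_iff: "x \<in> L \<Longrightarrow> even (Tr x) \<longleftrightarrow> N (qtau x) mod 4 = 0"
  by (cases "even (Tr x)") (simp_all add: N_qtau_even N_qtau_odd)

definition tau_class :: "nat \<Rightarrow> quat set" where
  "tau_class r = {\<beta> \<in> qtau ` L. N \<beta> mod 4 = r}"

definition tau_split :: "quat \<Rightarrow> (quat \<times> int) + (quat \<times> int)" where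
  "tau_split x = (if even (Tr x) then Inl else Inr) (qtau x, Tr x div 2)"

definition split_norm :: "(quat \<times> int) + (quat \<times> int) \<Rightarrow> nat" where
  "split_norm = case_sum (\<lambda>(\<beta>, s). N \<beta> div 4 + nat (s\<^sup>2))
     (\<lambda>(\<beta>, s). (N \<beta> + 1) div 4 + nat (s\<^sup>2 + s))"

lemma split_norm_tau_split:
  assumes "x \<in> L"
  shows "split_norm (tau_split x) = N x"
proof (cases "even (Tr x)")
  case True
  then show ?thesis
    using N_qtau_even(2)[OF assms True] by (simp add: split_norm_def tau_split_def)
next
  case False
  then show ?thesis
    using N_qtau_odd(2)[OF assms False] by (simp add: split_norm_def tau_split_def)
qed

lemma integer_translate_with_half_trace:
  assumes "y \<in> L"
  obtains x where "x \<in> L" "qtau x = qtau y" "Tr x div 2 = s" "even (Tr x) \<longleftrightarrow> even (Tr y)"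
proof
  let ?x = "qadd y (qof_rat (of_int (s - Tr y div 2)))"
  show "?x \<in> L"
    by (rule qadd_of_int_mem[OF assms])
  show "qtau ?x = qtau y"
    by (rule qtau_qadd_qof_rat)
  have "Tr ?x = Tr y + 2 * (s - Tr y div 2)"
    by (rule Tr_qadd_of_int[OF assms])
  then show "Tr ?x div 2 = s" "even (Tr ?x) \<longleftrightarrow> even (Tr y)"
    by presburger+
qed

lemma bij_betw_tau_split:
  "bij_betw tau_split L ((tau_class 0 \<times> UNIV) <+> (tau_class 3 \<times> UNIV))"
proof (rule bij_betwI')
  fix x y assume "x \<in> L" "y \<in> L"
  show "tau_split x = tau_split y \<longleftrightarrow> x = y"
  proof
    assume "tau_split x = tau_split y"
    then have "qtau x = qtau y" and half: "Tr x div 2 = Tr y div 2"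
      and parity: "even (Tr x) \<longleftrightarrow> even (Tr y)"
      by (auto simp: tau_split_def split: if_splits)
    from half parity have "Tr x = Tr y"
      by presburger
    then have "qtr x = qtr y"
      using \<open>x \<in> L\<close> \<open>y \<in> L\<close> by (simp add: qtr_eq_of_int_Tr)
    with \<open>qtau x = qtau y\<close> show "x = y"
      by (rule qtau_qtr_inj)
  qed simp
next
  fix x assume "x \<in> L"
  then show "tau_split x \<in> (tau_class 0 \<times> UNIV) <+> (tau_class 3 \<times> UNIV)"
    by (cases "even (Tr x)") (auto simp: tau_split_def tau_class_def N_qtau_even N_qtau_odd)
next
  fix z :: "(quat \<times> int) + (quat \<times> int)"
  assume "z \<in> (tau_class 0 \<times> UNIV) <+> (tau_class 3 \<times> UNIV)"
  then obtain y s where y: "y \<in> L" and z_eq: "z = (if even (Tr y) then Inl else Inr) (qtau y, s)"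
  proof (elim PlusE)
    fix p assume "p \<in> tau_class 0 \<times> UNIV" "z = Inl p"
    then obtain y where "y \<in> L" "fst p = qtau y" "even (Tr y)"
      by (auto simp: tau_class_def even_Tr_iff)
    then show thesis
      using \<open>z = Inl p\<close> by (intro that[of y "snd p"]) (simp_all add: prod_eq_iff)
  next
    fix p assume "p \<in> tau_class 3 \<times> UNIV" "z = Inr p"
    then obtain y where "y \<in> L" "fst p = qtau y" "odd (Tr y)"
      by (auto simp: tau_class_def even_Tr_iff)
    then show thesis
      using \<open>z = Inr p\<close> by (intro that[of y "snd p"]) (simp_all add: prod_eq_iff)
  qed
  obtain x where "x \<in> L" and "qtau x = qtau y" "Tr x div 2 = s" "even (Tr x) \<longleftrightarrow> even (Tr y)"
    using integer_translate_with_half_trace[OF y] .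
  then have "tau_split x = z"
    by (simp add: tau_split_def z_eq)
  then show "\<exists>x\<in>L. z = tau_split x"
    using \<open>x \<in> L\<close> by blast
qed

lemma finite_N_le: "finite {x \<in> L. N x \<le> n}"
proof -
  have "{x \<in> L. N x \<le> n} = {x \<in> L. qnorm a b x \<le> of_nat n}"
    using qnorm_eq_of_nat_N by auto
  then show ?thesis
    using finite_lattice_qnorm_le[OF a_neg b_neg] integral by (simp add: integral_lattice_def)
qed

lemma finite_fibres_if_N_le:
  assumes "X \<subseteq> L" "\<And>x. x \<in> X \<Longrightarrow> N x \<le> f (w x)"
  shows "finite_fibres X w"
  unfolding finite_fibres_def
proof
  fix n
  have "{x \<in> X. w x = n} \<subseteq> {x \<in> L. N x \<le> f n}"
    using assms by auto
  then show "finite {x \<in> X. w x = n}"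
    using finite_N_le by (rule finite_subset)
qed

lemma tau_class_subset: "tau_class r \<subseteq> L"
  using qtau_mem by (auto simp: tau_class_def)

lemma finite_fibres_tau_class_0: "finite_fibres (tau_class 0) (\<lambda>\<beta>. N \<beta> div 4)"
  by (rule finite_fibres_if_N_le[OF tau_class_subset, where f = "\<lambda>n. 4 * n + 3"]) simp

lemma finite_fibres_tau_class_3: "finite_fibres (tau_class 3) (\<lambda>\<beta>. (N \<beta> + 1) div 4)"
  by (rule finite_fibres_if_N_le[OF tau_class_subset, where f = "\<lambda>n. 4 * n + 3"]) simp

lemma theta_L_eq_generating_fps: "theta_L a b L = generating_fps L N"
proof (rule fps_ext)
  fix n
  have "{x \<in> L. qnorm a b x = of_nat n} = {x \<in> L. N x = n}"
    using qnorm_eq_of_nat_N by auto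
  then show "fps_nth (theta_L a b L) n = fps_nth (generating_fps L N) n"
    by (simp add: theta_L_def generating_fps_def)
qed

lemma Collect_qtau_qnorm_eq_of_int:
  "{\<beta> \<in> qtau ` L. \<exists>m::int. qnorm a b \<beta> = of_int m \<and> P m} = {\<beta> \<in> qtau ` L. P (int (N \<beta>))}"
proof (rule Collect_cong, rule conj_cong[OF refl])
  fix \<beta> assume "\<beta> \<in> qtau ` L"
  then have "\<beta> \<in> L"
    using qtau_mem by blast
  then have "qnorm a b \<beta> = of_int m \<longleftrightarrow> m = int (N \<beta>)" for m
    using qnorm_eq_of_nat_N by (metis of_int_eq_iff of_int_of_nat_eq)
  then show "(\<exists>m::int. qnorm a b \<beta> = of_int m \<and> P m) \<longleftrightarrow> P (int (N \<beta>))"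
    by auto
qed

lemma tau_sum0_eq_generating_fps:
  "tau_sum0 a b L = generating_fps (tau_class 0) (\<lambda>\<beta>. N \<beta> div 4)"
proof (rule fps_ext)
  fix n
  have "{\<beta> \<in> qtau ` L. \<exists>m::int. qnorm a b \<beta> = of_int m \<and> m mod 4 = 0 \<and> m div 4 = int n}
      = {\<beta> \<in> tau_class 0. N \<beta> div 4 = n}"
    unfolding Collect_qtau_qnorm_eq_of_int by (auto simp: tau_class_def of_nat_mod_div_4)
  then show "fps_nth (tau_sum0 a b L) n
      = fps_nth (generating_fps (tau_class 0) (\<lambda>\<beta>. N \<beta> div 4)) n"
    by (simp add: tau_sum0_def generating_fps_def)
qed

lemma tau_sum3_eq_generating_fps:
  "tau_sum3 a b L = generating_fps (tau_class 3) (\<lambda>\<beta>. (N \<beta> + 1) div 4)"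
proof (rule fps_ext)
  fix n
  have "{\<beta> \<in> qtau ` L. \<exists>m::int. qnorm a b \<beta> = of_int m \<and> m mod 4 = 3 \<and> (1 + m) div 4 = int n}
      = {\<beta> \<in> tau_class 3. (N \<beta> + 1) div 4 = n}"
    unfolding Collect_qtau_qnorm_eq_of_int by (auto simp: tau_class_def of_nat_mod_div_4)
  then show "fps_nth (tau_sum3 a b L) n
      = fps_nth (generating_fps (tau_class 3) (\<lambda>\<beta>. (N \<beta> + 1) div 4)) n"
    by (simp add: tau_sum3_def generating_fps_def)
qed

end

theorem lemma4p1:
  fixes a b :: rat and p :: int and L :: "quat set"
  assumes "ramified_exactly_at a b p"
    and "integral_lattice a b L"
    and "\<forall>n::int. qof_rat (of_int n) \<in> L"
  shows "theta_L a b L = tau_sum0 a b L * theta0 + tau_sum3 a b L * theta1"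
proof -
  interpret definite_integral_lattice a b L
    using assms by unfold_locales (auto simp: ramified_exactly_at_def)
  have "theta_L a b L = generating_fps L N"
    by (rule theta_L_eq_generating_fps)
  also have "\<dots> = generating_fps ((tau_class 0 \<times> UNIV) <+> (tau_class 3 \<times> UNIV)) split_norm"
    using bij_betw_tau_split split_norm_tau_split by (rule generating_fps_bij_betw)
  also have "\<dots> = generating_fps (tau_class 0 \<times> UNIV) (\<lambda>(\<beta>, s). N \<beta> div 4 + nat (s\<^sup>2))
      + generating_fps (tau_class 3 \<times> UNIV) (\<lambda>(\<beta>, s). (N \<beta> + 1) div 4 + nat (s\<^sup>2 + s))"
    unfolding split_norm_def
    by (intro generating_fps_Plus finite_fibres_Times finite_fibres_tau_class_0
        finite_fibres_tau_class_3 finite_fibres_square finite_fibres_pronic)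
  also have "\<dots> = generating_fps (tau_class 0) (\<lambda>\<beta>. N \<beta> div 4) * theta0
      + generating_fps (tau_class 3) (\<lambda>\<beta>. (N \<beta> + 1) div 4) * theta1"
    by (simp only: theta0_eq_generating_fps theta1_eq_generating_fps
        generating_fps_Times[OF finite_fibres_tau_class_0 finite_fibres_square]
        generating_fps_Times[OF finite_fibres_tau_class_3 finite_fibres_pronic])
  also have "\<dots> = tau_sum0 a b L * theta0 + tau_sum3 a b L * theta1"
    by (simp only: tau_sum0_eq_generating_fps tau_sum3_eq_generating_fps)
  finally show ?thesis .
qed

end
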